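(* For every integer $n\geq 3$, $$\dot{\imath}_{[1,2]}(P_3\Box P_n)=\begin{cases}\left\lfloor \frac{3n+8}{4}\right\rfloor & \text{if } n\equiv 2 \pmod 4,\\[2pt] \left\lfloor \frac{3n+4}{4}\right\rfloor & \text{otherwise.}\end{cases}$$
   Context: $P_k$ denotes the path on $k$ vertices and $P_m\Box P_n$ the Cartesian product of two paths (the $m\times n$ grid graph). A set $S$ of vertices of a graph $G$ is independent if no two vertices of $S$ are adjacent, and dominating if every vertex not in $S$ has at least one neighbor in $S$. An independent $[1,2]$-set of $G$ is an independent dominating set $S$ such that every vertex $v\in V(G)\setminus S$ has at least one and at most two neighbors in $S$. When $G$ has an independent $[1,2]$-set, $\dot{\imath}_{[1,2]}(G)$ denotes the minimum cardinality of an independent $[1,2]$-set of $G$ (the statement includes the existence of such a set). *)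

theory Defs
  imports Main
begin

text \<open>A graph is given by a vertex set V and a (symmetric, irreflexive) adjacency relation E.\<close>

definition independent_set :: "'a set \<Rightarrow> ('a \<Rightarrow> 'a \<Rightarrow> bool) \<Rightarrow> 'a set \<Rightarrow> bool" where
  "independent_set V E S \<longleftrightarrow> S \<subseteq> V \<and> (\<forall>u\<in>S. \<forall>v\<in>S. \<not> E u v)"

definition dominating_set :: "'a set \<Rightarrow> ('a \<Rightarrow> 'a \<Rightarrow> bool) \<Rightarrow> 'a set \<Rightarrow> bool" where
  "dominating_set V E S \<longleftrightarrow> S \<subseteq> V \<and> (\<forall>v\<in>V - S. \<exists>u\<in>S. E v u)"

definition indep_12_set :: "'a set \<Rightarrow> ('a \<Rightarrow> 'a \<Rightarrow> bool) \<Rightarrow> 'a set \<Rightarrow> bool" where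
  "indep_12_set V E S \<longleftrightarrow> independent_set V E S \<and> dominating_set V E S \<and>
     (\<forall>v\<in>V - S. 1 \<le> card {u\<in>S. E v u} \<and> card {u\<in>S. E v u} \<le> 2)"

definition has_indep_12_set :: "'a set \<Rightarrow> ('a \<Rightarrow> 'a \<Rightarrow> bool) \<Rightarrow> bool" where
  "has_indep_12_set V E \<longleftrightarrow> (\<exists>S. indep_12_set V E S)"

text \<open>Minimum cardinality of an independent [1,2]-set (meaningful for finite graphs having one).\<close>
definition indep_12_number :: "'a set \<Rightarrow> ('a \<Rightarrow> 'a \<Rightarrow> bool) \<Rightarrow> nat" where
  "indep_12_number V E = (LEAST k. \<exists>S. indep_12_set V E S \<and> card S = k)"

definition grid_vertices :: "nat \<Rightarrow> nat \<Rightarrow> (nat \<times> nat) set" where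
  "grid_vertices m n = {0..<m} \<times> {0..<n}"

definition grid_adj :: "nat \<times> nat \<Rightarrow> nat \<times> nat \<Rightarrow> bool" where
  "grid_adj p q \<longleftrightarrow> (fst p = fst q \<and> (snd p = Suc (snd q) \<or> snd q = Suc (snd p)))
                   \<or> (snd p = snd q \<and> (fst p = Suc (fst q) \<or> fst q = Suc (fst p)))"

end

theory Submission
  imports Defs
begin

text \<open>Read a vertex set of \<open>P\<^sub>3 \<box> P\<^sub>n\<close> column by column. An independent set meets each
  column in one of the five independent sets of \<open>P\<^sub>3\<close>, and the [1,2]-condition at a vertex
  involves only its own column and the two adjacent ones. So independent [1,2]-sets are the column
  sequences in which every column is admissible between its neighbours, and their size is the total
  weight of the columns.

  Upper bound: the periodic pattern \<open>Mid, Emp, TopBot, Emp\<close> has weight 3 per 4 columns; preceded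
  by a short alternating \<open>Top/Bot\<close> prefix, whose length depends on \<open>n mod 4\<close>, it is valid and
  has exactly the claimed weight.

  Lower bound: a potential on (number of remaining columns, current pair of adjacent columns), growing
  by 3 every 4 columns, never exceeds the weight still to come. This is proved by induction from the
  right end; the induction step is a finite check over admissible triples of columns.\<close>

lemma indep_12_set_iff:
  "indep_12_set V E S \<longleftrightarrow> independent_set V E S \<and>
     (\<forall>v\<in>V - S. 1 \<le> card {u\<in>S. E v u} \<and> card {u\<in>S. E v u} \<le> 2)"
proof -
  have "\<exists>u\<in>S. E v u" if "1 \<le> card {u\<in>S. E v u}" for v
    using that by (metis (mono_tags, lifting) card.empty empty_Collect_eq not_one_le_zero)
  then show ?thesis
    by (auto simp: indep_12_set_def dominating_set_def independent_set_def)
qed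

lemma indep_12_number_eqI:
  assumes "indep_12_set V E S" "card S = k" "\<And>T. indep_12_set V E T \<Longrightarrow> k \<le> card T"
  shows "has_indep_12_set V E \<and> indep_12_number V E = k"
proof
  show "has_indep_12_set V E" using assms(1) by (auto simp: has_indep_12_set_def)
  show "indep_12_number V E = k" unfolding indep_12_number_def
    by (rule Least_equality) (use assms in auto)
qed

lemma card_grid_nbrs:
  "card {u \<in> S. grid_adj (i, j) u} =
     of_bool ((i, Suc j) \<in> S) + of_bool (0 < j \<and> (i, j - 1) \<in> S)
     + of_bool ((Suc i, j) \<in> S) + of_bool (0 < i \<and> (i - 1, j) \<in> S)"
proof -
  define N where "N = {(i, Suc j), (Suc i, j)} \<union> (if 0 < j then {(i, j - 1)} else {})
    \<union> (if 0 < i then {(i - 1, j)} else {})"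
  have "{u \<in> S. grid_adj (i, j) u} = N \<inter> S"
    by (auto simp: N_def grid_adj_def split: if_splits)
  moreover have "finite N" by (simp add: N_def)
  ultimately have "card {u \<in> S. grid_adj (i, j) u} = (\<Sum>u\<in>N. of_bool (u \<in> S))"
    by (simp add: sum.inter_restrict[symmetric])
  then show ?thesis by (cases "i = 0"; cases "j = 0") (auto simp: N_def)
qed

section \<open>Column sequences\<close>

datatype column = Emp | Top | Mid | Bot | TopBot

fun occupied :: "column \<Rightarrow> nat \<Rightarrow> bool" where
  "occupied Emp i = False"
| "occupied Top i = (i = 0)"
| "occupied Mid i = (i = 1)"
| "occupied Bot i = (i = 2)"
| "occupied TopBot i = (i = 0 \<or> i = 2)"

fun weight :: "column \<Rightarrow> nat" where
  "weight Emp = 0" | "weight Top = 1" | "weight Mid = 1" | "weight Bot = 1" | "weight TopBot = 2"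

lemma occupied_less_3: "occupied c i \<Longrightarrow> i < 3"
  by (cases c) auto

lemma occupied_not_Suc: "occupied c i \<Longrightarrow> \<not> occupied c (Suc i)"
  by (cases c) auto

lemma finite_occupied: "finite {i. occupied c i}"
  using occupied_less_3 by (auto intro: finite_subset[of _ "{..<3}"])

lemma card_occupied: "card {i. occupied c i} = weight c"
proof -
  have "{i. occupied c i} = (case c of Emp \<Rightarrow> {} | Top \<Rightarrow> {0} | Mid \<Rightarrow> {1} | Bot \<Rightarrow> {2} | TopBot \<Rightarrow> {0, 2})"
    by (cases c) auto
  then show ?thesis by (cases c) simp_all
qed

definition chosen_nbrs :: "column \<Rightarrow> column \<Rightarrow> column \<Rightarrow> nat \<Rightarrow> nat" where
  "chosen_nbrs a b c i = of_bool (occupied a i) + of_bool (occupied c i)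
     + of_bool (0 < i \<and> occupied b (i - 1)) + of_bool (occupied b (Suc i))"

definition vertex_ok :: "column \<Rightarrow> column \<Rightarrow> column \<Rightarrow> nat \<Rightarrow> bool" where
  "vertex_ok a b c i \<longleftrightarrow> \<not> (occupied a i \<and> occupied b i) \<and> \<not> (occupied b i \<and> occupied c i) \<and>
     (\<not> occupied b i \<longrightarrow> 1 \<le> chosen_nbrs a b c i \<and> chosen_nbrs a b c i \<le> 2)"

definition admissible :: "column \<Rightarrow> column \<Rightarrow> column \<Rightarrow> bool" where
  "admissible a b c \<longleftrightarrow> (\<forall>i<3. vertex_ok a b c i)"

lemma admissible_unfold:
  "admissible a b c \<longleftrightarrow> vertex_ok a b c 0 \<and> vertex_ok a b c 1 \<and> vertex_ok a b c 2"
  unfolding admissible_def by (auto simp: numeral_3_eq_3 numeral_2_eq_2 less_Suc_eq)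

lemmas admissible_simps = admissible_unfold vertex_ok_def chosen_nbrs_def

definition left_col :: "(nat \<Rightarrow> column) \<Rightarrow> nat \<Rightarrow> column" where
  "left_col f j = (if j = 0 then Emp else f (j - 1))"

definition right_col :: "(nat \<Rightarrow> column) \<Rightarrow> nat \<Rightarrow> nat \<Rightarrow> column" where
  "right_col f n j = (if Suc j < n then f (Suc j) else Emp)"

definition valid_columns :: "nat \<Rightarrow> (nat \<Rightarrow> column) \<Rightarrow> bool" where
  "valid_columns n f \<longleftrightarrow> (\<forall>j<n. admissible (left_col f j) (f j) (right_col f n j))"

lemma valid_columns_interior:
  assumes "valid_columns n f" "Suc j < n"
  shows "admissible (left_col f j) (f j) (f (Suc j))"
  using assms(1)[unfolded valid_columns_def, rule_format, of j] assms(2) by (simp add: right_col_def)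

lemma valid_columns_last:
  assumes "valid_columns n f" "n = Suc j"
  shows "admissible (left_col f j) (f j) Emp"
  using assms(1)[unfolded valid_columns_def, rule_format, of j] assms(2) by (simp add: right_col_def)

definition column_set :: "(nat \<Rightarrow> column) \<Rightarrow> nat \<Rightarrow> (nat \<times> nat) set" where
  "column_set f n = {(i, j). j < n \<and> occupied (f j) i}"

lemma mem_column_set [simp]: "(i, j) \<in> column_set f n \<longleftrightarrow> j < n \<and> occupied (f j) i"
  by (simp add: column_set_def)

lemma column_set_subset: "column_set f n \<subseteq> grid_vertices 3 n"
  by (auto simp: column_set_def grid_vertices_def dest: occupied_less_3)

lemma card_column_set: "card (column_set f n) = (\<Sum>j<n. weight (f j))"
proof -
  have "column_set f n = prod.swap ` (SIGMA j:{..<n}. {i. occupied (f j) i})"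
    by (auto simp: column_set_def)
  then have "card (column_set f n) = card (SIGMA j:{..<n}. {i. occupied (f j) i})"
    by (simp add: card_image)
  also have "\<dots> = (\<Sum>j<n. weight (f j))"
    by (simp add: finite_occupied card_occupied)
  finally show ?thesis .
qed

lemma card_grid_nbrs_column_set:
  assumes "j < n"
  shows "card {u \<in> column_set f n. grid_adj (i, j) u} = chosen_nbrs (left_col f j) (f j) (right_col f n j) i"
  using assms by (auto simp: card_grid_nbrs chosen_nbrs_def left_col_def right_col_def)

lemma independent_column_set_iff:
  "independent_set (grid_vertices 3 n) grid_adj (column_set f n) \<longleftrightarrow>
     (\<forall>j i. Suc j < n \<longrightarrow> \<not> (occupied (f j) i \<and> occupied (f (Suc j)) i))"
proof -
  have "\<not> grid_adj u v" if "\<forall>j i. Suc j < n \<longrightarrow> \<not> (occupied (f j) i \<and> occupied (f (Suc j)) i)"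
    and "u \<in> column_set f n" "v \<in> column_set f n" for u v
    using that occupied_not_Suc by (cases u; cases v) (auto simp: grid_adj_def)
  moreover have "grid_adj (i, j) (i, Suc j)" for i j
    by (simp add: grid_adj_def)
  ultimately show ?thesis
    using column_set_subset unfolding independent_set_def by fastforce
qed

lemma indep_12_set_column_set_iff:
  "indep_12_set (grid_vertices 3 n) grid_adj (column_set f n) \<longleftrightarrow> valid_columns n f"
proof -
  have clashes: "(\<forall>j i. Suc j < n \<longrightarrow> \<not> (occupied (f j) i \<and> occupied (f (Suc j)) i)) \<longleftrightarrow>
    (\<forall>j<n. \<forall>i<3. \<not> (occupied (left_col f j) i \<and> occupied (f j) i) \<and>
       \<not> (occupied (f j) i \<and> occupied (right_col f n j) i))"
  proof (intro iffI allI impI)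
    fix j i
    assume clash_free: "\<forall>j i. Suc j < n \<longrightarrow> \<not> (occupied (f j) i \<and> occupied (f (Suc j)) i)"
      and "j < n"
    show "\<not> (occupied (left_col f j) i \<and> occupied (f j) i) \<and>
       \<not> (occupied (f j) i \<and> occupied (right_col f n j) i)"
      using clash_free[rule_format, of "j - 1" i] clash_free[rule_format, of j i] \<open>j < n\<close>
      by (cases j) (auto simp: left_col_def right_col_def)
  next
    fix j i
    assume ok: "\<forall>j<n. \<forall>i<3. \<not> (occupied (left_col f j) i \<and> occupied (f j) i) \<and>
       \<not> (occupied (f j) i \<and> occupied (right_col f n j) i)" and "Suc j < n"
    show "\<not> (occupied (f j) i \<and> occupied (f (Suc j)) i)"
    proof
      assume both: "occupied (f j) i \<and> occupied (f (Suc j)) i"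
      then have "i < 3" by (auto dest: occupied_less_3)
      then show False
        using ok[rule_format, of j i] both \<open>Suc j < n\<close> by (simp add: right_col_def)
    qed
  qed
  have counts: "(\<forall>v\<in>grid_vertices 3 n - column_set f n. 1 \<le> card {u \<in> column_set f n. grid_adj v u} \<and>
       card {u \<in> column_set f n. grid_adj v u} \<le> 2) \<longleftrightarrow>
    (\<forall>j<n. \<forall>i<3. \<not> occupied (f j) i \<longrightarrow> 1 \<le> chosen_nbrs (left_col f j) (f j) (right_col f n j) i \<and>
       chosen_nbrs (left_col f j) (f j) (right_col f n j) i \<le> 2)"
  proof -
    have "grid_vertices 3 n - column_set f n = {(i, j). j < n \<and> i < 3 \<and> \<not> occupied (f j) i}"
      by (auto simp: grid_vertices_def)
    then show ?thesis
      by (auto simp: card_grid_nbrs_column_set)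
  qed
  show ?thesis
    unfolding indep_12_set_iff independent_column_set_iff clashes counts
      valid_columns_def admissible_def vertex_ok_def
    by blast
qed

definition column_of :: "(nat \<times> nat) set \<Rightarrow> nat \<Rightarrow> column" where
  "column_of S j =
     (if (0, j) \<in> S \<and> (2, j) \<in> S then TopBot else if (0, j) \<in> S then Top
      else if (1, j) \<in> S then Mid else if (2, j) \<in> S then Bot else Emp)"

lemma column_set_column_of:
  assumes "independent_set (grid_vertices 3 n) grid_adj S"
  shows "column_set (column_of S) n = S"
proof -
  have sub: "S \<subseteq> grid_vertices 3 n" and indep: "\<And>u v. u \<in> S \<Longrightarrow> v \<in> S \<Longrightarrow> \<not> grid_adj u v"
    using assms unfolding independent_set_def by blast+
  have no_vertical: "\<not> ((i, j) \<in> S \<and> (Suc i, j) \<in> S)" for i j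
    using indep[of "(i, j)" "(Suc i, j)"] by (auto simp: grid_adj_def)
  show ?thesis
  proof (rule set_eqI)
    fix x :: "nat \<times> nat"
    obtain i j where x: "x = (i, j)" by (cases x)
    show "x \<in> column_set (column_of S) n \<longleftrightarrow> x \<in> S"
    proof (cases "i < 3 \<and> j < n")
      case True
      then have "i = 0 \<or> i = 1 \<or> i = 2" by auto
      then show ?thesis
        using True no_vertical[of 0 j] no_vertical[of 1 j] by (auto simp: x column_of_def numeral_2_eq_2)
    next
      case False
      then show ?thesis
        using sub by (auto simp: x column_of_def grid_vertices_def)
    qed
  qed
qed

section \<open>Lower bound\<close>

text \<open>The table was found by dynamic programming over pairs of adjacent columns: for \<open>m \<ge> 2\<close>,
  \<open>potential m a b\<close> is exactly the least weight of the last \<open>m + 1\<close> columns of a valid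
  sequence, given that they start with \<open>b\<close> preceded by \<open>a\<close> (whenever such a sequence exists).\<close>
definition offset :: "nat \<Rightarrow> column \<Rightarrow> column \<Rightarrow> nat" where
  "offset r a b =
     (if r = 0 then (if b = Mid \<or> (a, b) = (TopBot, Emp) then 1 else 2)
      else if r = 1 then
        (if (a, b) = (TopBot, Emp) then 1
         else if (a, b) \<in> {(Top, Bot), (Bot, Top), (Mid, Emp)} then 2 else 3)
      else if r = 2 then 3
      else if (a, b) = (Emp, TopBot) then 5
      else if (a, b) \<in> {(Mid, Emp), (TopBot, Emp)} then 3 else 4)"

definition potential :: "nat \<Rightarrow> column \<Rightarrow> column \<Rightarrow> nat" where
  "potential m a b = 3 * (m div 4) + offset (m mod 4) a b"

lemma offset_step:
  assumes "admissible a b c" "r < 3"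
  shows "offset (Suc r) a b \<le> weight b + offset r b c"
proof -
  have "r = 0 \<or> r = 1 \<or> r = 2" using assms(2) by auto
  then show ?thesis using assms(1)
    by (elim disjE; cases a; cases b; cases c) (simp_all add: admissible_simps offset_def)
qed

lemma offset_wrap:
  assumes "admissible a b c"
  shows "3 + offset 0 a b \<le> weight b + offset 3 b c"
  using assms by (cases a; cases b; cases c) (simp_all add: admissible_simps offset_def)

lemma potential_step:
  assumes "admissible a b c"
  shows "potential (Suc m) a b \<le> weight b + potential m b c"
proof (cases "m mod 4 = 3")
  case True
  then have "Suc m div 4 = Suc (m div 4)" "Suc m mod 4 = 0" by (simp_all add: div_Suc mod_Suc)
  then show ?thesis using offset_wrap[OF assms] True by (simp add: potential_def)
next
  case False
  then have "Suc m div 4 = m div 4" "Suc m mod 4 = Suc (m mod 4)" "m mod 4 < 3"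
    by (simp_all add: div_Suc mod_Suc)
  then show ?thesis using offset_step[OF assms] by (simp add: potential_def)
qed

text \<open>For one or two remaining columns the potential is not a lower bound, so the induction
  starts from the last three columns.\<close>
lemma weight_last_three:
  assumes "admissible a b c" "admissible b c d" "admissible c d Emp"
  shows "3 \<le> weight b + weight c + weight d"
  using assms
  by (cases b; cases c; cases d; simp add: admissible_simps; cases a; simp add: admissible_simps)

lemma potential_le_suffix_weight:
  assumes "valid_columns n f" "k + 3 \<le> n"
  shows "potential (n - Suc k) (left_col f k) (f k) \<le> (\<Sum>j=k..<n. weight (f j))"
proof -
  have "k \<le> n - 3" using assms(2) by simp
  then show ?thesis
  proof (induction k rule: inc_induct)
    case base
    define j where "j = n - 3"
    have n: "n = Suc (Suc (Suc j))" using assms(2) by (simp add: j_def)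
    have "admissible (left_col f j) (f j) (f (Suc j))" "admissible (f j) (f (Suc j)) (f (Suc (Suc j)))"
      "admissible (f (Suc j)) (f (Suc (Suc j))) Emp"
      using valid_columns_interior[OF assms(1), of j] valid_columns_interior[OF assms(1), of "Suc j"]
        valid_columns_last[OF assms(1), of "Suc (Suc j)"] n by (simp_all add: left_col_def)
    then have "3 \<le> weight (f j) + weight (f (Suc j)) + weight (f (Suc (Suc j)))"
      by (rule weight_last_three)
    then show ?case
      unfolding j_def[symmetric] by (simp add: n potential_def offset_def numeral_3_eq_3)
  next
    case (step k)
    have "n - Suc k = Suc (n - Suc (Suc k))" using step.hyps(2) by simp
    then have "potential (n - Suc k) (left_col f k) (f k)
        \<le> weight (f k) + potential (n - Suc (Suc k)) (f k) (f (Suc k))"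
      using potential_step valid_columns_interior[OF assms(1)] step.hyps(2) by simp
    also have "\<dots> \<le> weight (f k) + (\<Sum>j=Suc k..<n. weight (f j))"
      using step.IH by (simp add: left_col_def)
    also have "\<dots> = (\<Sum>j=k..<n. weight (f j))"
      using step.hyps(2) by (simp add: sum.atLeast_Suc_lessThan)
    finally show ?case .
  qed
qed

definition i12_value :: "nat \<Rightarrow> nat" where
  "i12_value n = (if n mod 4 = 2 then (3 * n + 8) div 4 else (3 * n + 4) div 4)"

lemma mod_4_cases:
  fixes k :: nat
  obtains "k mod 4 = 0" | "k mod 4 = 1" | "k mod 4 = 2" | "k mod 4 = 3"
  by fastforce

lemma div_4_affine:
  fixes n c :: nat
  shows "(3 * n + c) div 4 = 3 * (n div 4) + (3 * (n mod 4) + c) div 4"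
proof -
  have eq: "3 * n + c = (3 * (n mod 4) + c) + 4 * (3 * (n div 4))"
    using div_mult_mod_eq[of n 4] by linarith
  have "((3 * (n mod 4) + c) + 4 * (3 * (n div 4))) div 4 = 3 * (n div 4) + (3 * (n mod 4) + c) div 4"
    by (rule div_mult_self2) simp
  then show ?thesis by (simp only: eq)
qed

lemma i12_value_eq: "i12_value n = 3 * (n div 4) + [1, 1, 3, 3] ! (n mod 4)"
  by (cases n rule: mod_4_cases) (simp_all add: i12_value_def div_4_affine)

lemma i12_value_le_potential: "i12_value (Suc m) \<le> potential m Emp b"
  by (cases m rule: mod_4_cases; cases b)
    (simp_all add: i12_value_eq potential_def offset_def mod_Suc div_Suc)

lemma valid_columns_weight_ge:
  assumes "valid_columns n f" "3 \<le> n"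
  shows "i12_value n \<le> (\<Sum>j<n. weight (f j))"
proof -
  have "i12_value n \<le> potential (n - 1) Emp (f 0)"
    using i12_value_le_potential[of "n - 1"] assms(2) by simp
  also have "\<dots> \<le> (\<Sum>j=0..<n. weight (f j))"
    using potential_le_suffix_weight[OF assms(1), of 0] assms(2) by (simp add: left_col_def)
  finally show ?thesis by (simp add: atLeast0LessThan)
qed

lemma indep_12_set_card_ge:
  assumes "indep_12_set (grid_vertices 3 n) grid_adj S" "3 \<le> n"
  shows "i12_value n \<le> card S"
proof -
  have S: "column_set (column_of S) n = S"
    using assms(1) by (simp add: indep_12_set_def column_set_column_of)
  then have "valid_columns n (column_of S)"
    using assms(1) indep_12_set_column_set_iff by metis
  then have "i12_value n \<le> (\<Sum>j<n. weight (column_of S j))"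
    using assms(2) by (rule valid_columns_weight_ge)
  also have "\<dots> = card S"
    by (metis S card_column_set)
  finally show ?thesis .
qed

section \<open>Upper bound\<close>

definition periodic_col :: "nat \<Rightarrow> column" where
  "periodic_col k = [Mid, Emp, TopBot, Emp] ! (k mod 4)"

definition witness :: "nat \<Rightarrow> nat \<Rightarrow> column" where
  "witness s j = (if j < s then (if even j then Top else Bot) else periodic_col (j - s))"

lemma periodic_col_admissible:
  "admissible (periodic_col k) (periodic_col (Suc k)) (periodic_col (Suc (Suc k)))"
  by (cases k rule: mod_4_cases) (simp_all add: periodic_col_def mod_Suc admissible_simps)

lemma witness_admissible:
  assumes "s \<in> {0, 2, 3}"
  shows "admissible (left_col (witness s) j) (witness s j) (witness s (Suc j))"
proof (cases "s < j")
  case True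
  then have "left_col (witness s) j = periodic_col (j - Suc s)"
    "witness s j = periodic_col (Suc (j - Suc s))" "witness s (Suc j) = periodic_col (Suc (Suc (j - Suc s)))"
    by (auto simp: left_col_def witness_def Suc_diff_Suc Suc_diff_le)
  then show ?thesis using periodic_col_admissible by metis
next
  case False
  then have "j \<le> 3" using assms by auto
  then have "j = 0 \<or> j = 1 \<or> j = 2 \<or> j = 3" by auto
  with assms show ?thesis
    by (elim disjE insertE) (simp_all add: left_col_def witness_def periodic_col_def admissible_simps)
qed

lemma witness_last_admissible:
  assumes "s \<in> {0, 2, 3}" "t mod 4 \<in> {1, 3}"
  shows "admissible (left_col (witness s) (s + t - 1)) (witness s (s + t - 1)) Emp"
proof (cases t)
  case 0
  with assms(2) show ?thesis by simp
next
  case (Suc t')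
  show ?thesis
  proof (cases t')
    case 0
    with Suc assms(1) show ?thesis
      by (elim insertE) (simp_all add: left_col_def witness_def periodic_col_def admissible_simps)
  next
    case (Suc k)
    with \<open>t = Suc t'\<close> assms(2) have "k mod 4 = 1 \<or> k mod 4 = 3"
      by (auto simp: mod_Suc split: if_splits)
    with \<open>t = Suc t'\<close> Suc show ?thesis
      by (auto simp: left_col_def witness_def periodic_col_def mod_Suc admissible_simps)
  qed
qed

lemma valid_columnsI:
  assumes "0 < n" "\<And>j. Suc j < n \<Longrightarrow> admissible (left_col f j) (f j) (f (Suc j))"
    "admissible (left_col f (n - 1)) (f (n - 1)) Emp"
  shows "valid_columns n f"
  unfolding valid_columns_def right_col_def
proof (intro allI impI)
  fix j assume "j < n"
  show "admissible (left_col f j) (f j) (if Suc j < n then f (Suc j) else Emp)"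
  proof (cases "Suc j < n")
    case False
    with \<open>j < n\<close> have "j = n - 1" by simp
    then show ?thesis using assms(3) False by simp
  qed (simp add: assms(2))
qed

lemma valid_columns_witness:
  assumes "s \<in> {0, 2, 3}" "t mod 4 \<in> {1, 3}"
  shows "valid_columns (s + t) (witness s)"
proof (rule valid_columnsI)
  show "0 < s + t" using assms(2) by (cases t) auto
qed (use witness_admissible[OF assms(1)] witness_last_admissible[OF assms] in simp_all)

lemma sum_weight_witness:
  "(\<Sum>j<s + t. weight (witness s j)) = s + 3 * (t div 4) + [0, 1, 1, 3] ! (t mod 4)"
proof (induction t)
  case 0
  have "(\<Sum>j<s. weight (witness s j)) = (\<Sum>j<s. 1)"
    by (rule sum.cong) (auto simp: witness_def)
  then show ?case by simp
next
  case (Suc t)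
  then show ?case
    by (cases t rule: mod_4_cases) (simp_all add: witness_def periodic_col_def mod_Suc div_Suc)
qed

lemma witness_indep_12_set:
  assumes "s \<in> {0, 2, 3}" "k \<in> {1, 3}"
  shows "indep_12_set (grid_vertices 3 (s + (4 * p + k))) grid_adj (column_set (witness s) (s + (4 * p + k)))"
    and "card (column_set (witness s) (s + (4 * p + k))) = s + 3 * p + k"
proof -
  from assms(2) have k: "(4 * p + k) mod 4 = k" "(4 * p + k) div 4 = p" by auto
  show "indep_12_set (grid_vertices 3 (s + (4 * p + k))) grid_adj (column_set (witness s) (s + (4 * p + k)))"
    using valid_columns_witness[OF assms(1)] assms(2) k by (simp add: indep_12_set_column_set_iff)
  show "card (column_set (witness s) (s + (4 * p + k))) = s + 3 * p + k"
    using assms(2) k by (auto simp: card_column_set sum_weight_witness)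
qed

lemma i12_value_witness_cases:
  assumes "3 \<le> n"
  obtains s k p where "s \<in> {0, 2, 3}" "k \<in> {1, 3}" "n = s + (4 * p + k)" "i12_value n = s + 3 * p + k"
proof -
  define q where "q = n div 4"
  have n: "n = 4 * q + n mod 4" by (simp add: q_def)
  show ?thesis
  proof (cases n rule: mod_4_cases)
    case 1
    then show ?thesis
      using that[of 3 1 "q - 1"] n assms by (simp add: i12_value_eq q_def[symmetric])
  next
    case 2
    then show ?thesis
      using that[of 0 1 q] n by (simp add: i12_value_eq q_def[symmetric])
  next
    case 3
    then show ?thesis
      using that[of 3 3 "q - 1"] n assms by (simp add: i12_value_eq q_def[symmetric])
  next
    case 4
    then show ?thesis
      using that[of 2 1 q] n by (simp add: i12_value_eq q_def[symmetric])
  qed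
qed

lemma exists_indep_12_set_card:
  assumes "3 \<le> n"
  shows "\<exists>S. indep_12_set (grid_vertices 3 n) grid_adj S \<and> card S = i12_value n"
  using assms
proof (cases rule: i12_value_witness_cases)
  case (1 s k p)
  then show ?thesis using witness_indep_12_set[OF 1(1,2), of p] by auto
qed

theorem mainTheorem4:
  fixes n :: nat
  assumes "n \<ge> 3"
  shows "has_indep_12_set (grid_vertices 3 n) grid_adj \<and>
         indep_12_number (grid_vertices 3 n) grid_adj =
           (if n mod 4 = 2 then (3 * n + 8) div 4 else (3 * n + 4) div 4)"
proof -
  obtain S where "indep_12_set (grid_vertices 3 n) grid_adj S" "card S = i12_value n"
    using exists_indep_12_set_card[OF assms] by blast
  from indep_12_number_eqI[OF this indep_12_set_card_ge[OF _ assms]] show ?thesis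
    by (simp add: i12_value_def)
qed

end
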